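(* Let $T$ be a triangle which is not of type $(90^\circ,60^\circ,30^\circ)$. Then the 3-graph $F_{3,2}$ with vertex set $[5]$ and edges $123,145,245,345$ is forbidden for $T$.
   Context: A 3-graph is a 3-uniform hypergraph; $G$ is $F$-free if it has no (not necessarily induced) subhypergraph isomorphic to $F$. A triangle is of type $(\alpha,\beta,\gamma)$ if $\alpha\ge\beta\ge\gamma$ are its interior angles in degrees. For a triangle $T$ with side lengths $a,b,c$ and $\varepsilon>0$, with $\varepsilon'=\varepsilon\min\{a,b,c\}$, a triangle $A'B'C'$ is $\varepsilon$-congruent to $T$ if there are $A,B,C\in\mathbb{R}^2$ with $ABC$ congruent to $T$ and $A',B',C'$ within distance $\varepsilon'$ of $A,B,C$ respectively. For finite $P\subseteq\mathbb{R}^2$, $\mathcal{H}(T,P,\varepsilon)$ is the 3-graph on $P$ whose edges are triples forming triangles $\varepsilon$-congruent to $T$. A 3-graph $H$ is forbidden for $T$ if there exists $\varepsilon>0$ such that for every $P\subseteq\mathbb{R}^2$ with $|P|=|V(H)|$, $\mathcal{H}(T,P,\varepsilon)$ is $H$-free. *)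

theory Defs
  imports "HOL-Analysis.Analysis"
begin

type_synonym pt = "real^2"

definition angle_at :: "pt \<Rightarrow> pt \<Rightarrow> pt \<Rightarrow> real" where
  "angle_at p q r = arccos (((q - p) \<bullet> (r - p)) / (norm (q - p) * norm (r - p)))"

definition is_triangle :: "pt \<Rightarrow> pt \<Rightarrow> pt \<Rightarrow> bool" where
  "is_triangle A0 B0 C0 \<longleftrightarrow> \<not> collinear {A0, B0, C0}"

definition type_90_60_30 :: "pt \<Rightarrow> pt \<Rightarrow> pt \<Rightarrow> bool" where
  "type_90_60_30 A0 B0 C0 \<longleftrightarrow>
     {# angle_at A0 B0 C0, angle_at B0 C0 A0, angle_at C0 A0 B0 #} = {# pi/2, pi/3, pi/6 #}"

definition congruent_to :: "pt \<Rightarrow> pt \<Rightarrow> pt \<Rightarrow> pt \<Rightarrow> pt \<Rightarrow> pt \<Rightarrow> bool" where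
  "congruent_to A B C A0 B0 C0 \<longleftrightarrow>
     dist A B = dist A0 B0 \<and> dist B C = dist B0 C0 \<and> dist C A = dist C0 A0"

definition eps_congruent :: "real \<Rightarrow> pt \<Rightarrow> pt \<Rightarrow> pt \<Rightarrow> pt \<Rightarrow> pt \<Rightarrow> pt \<Rightarrow> bool" where
  "eps_congruent \<epsilon> A' B' C' A0 B0 C0 \<longleftrightarrow>
     (let \<epsilon>' = \<epsilon> * Min {dist A0 B0, dist B0 C0, dist C0 A0} in
      \<exists>A B C. congruent_to A B C A0 B0 C0 \<and>
        dist A' A \<le> \<epsilon>' \<and> dist B' B \<le> \<epsilon>' \<and> dist C' C \<le> \<epsilon>')"

text \<open>A 3-graph is a pair (vertex set, edge set), edges being 3-element vertex sets.\<close>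
type_synonym 'a graph3 = "'a set \<times> 'a set set"

definition tri_hypergraph :: "pt \<Rightarrow> pt \<Rightarrow> pt \<Rightarrow> pt set \<Rightarrow> real \<Rightarrow> pt graph3" where
  "tri_hypergraph A0 B0 C0 P \<epsilon> =
     (P, {{x, y, z} | x y z. x \<in> P \<and> y \<in> P \<and> z \<in> P \<and>
            x \<noteq> y \<and> y \<noteq> z \<and> x \<noteq> z \<and> eps_congruent \<epsilon> x y z A0 B0 C0})"

definition contains_copy :: "'b graph3 \<Rightarrow> 'a graph3 \<Rightarrow> bool" where
  "contains_copy G H \<longleftrightarrow>
     (\<exists>f. inj_on f (fst H) \<and> f ` fst H \<subseteq> fst G \<and> (\<forall>e\<in>snd H. f ` e \<in> snd G))"

definition free_of :: "'a graph3 \<Rightarrow> 'b graph3 \<Rightarrow> bool" where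
  "free_of H G \<longleftrightarrow> \<not> contains_copy G H"

definition forbidden_for :: "'a graph3 \<Rightarrow> pt \<Rightarrow> pt \<Rightarrow> pt \<Rightarrow> bool" where
  "forbidden_for H A0 B0 C0 \<longleftrightarrow>
     (\<exists>\<epsilon>>0. \<forall>P. finite P \<and> card P = card (fst H) \<longrightarrow>
        free_of H (tri_hypergraph A0 B0 C0 P \<epsilon>))"

definition F32 :: "nat graph3" where
  "F32 = ({1..5}, {{1,2,3}, {1,4,5}, {2,4,5}, {3,4,5}})"

end

(* If the four triples 123, 145, 245, 345 were exactly congruent to T, the points 1, 2, 3 would be
   apexes over the segment 45 of triangles congruent to T. Over a segment there are only four such
   apexes, the vertices of a rectangle, so 123 is a right triangle whose legs are the sides of that
   rectangle; matching its sides with those of T forces the squared sides of T to be in the ratio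
   1 : 3 : 4, i.e. T has type (90,60,30).
   For approximate congruence, let the defect of a 5-tuple be the largest distance of its four
   triples from congruent copies of T. The defect is continuous, translation invariant and, by the
   exact case, positive; it is at least 1 unless all points lie in a fixed ball around point 4. By
   compactness it is bounded below by some m > 0, and any epsilon with 2 epsilon min(a,b,c) < m
   works. *)

theory Submission
  imports Defs
begin

lemma mset2_eq_iff: "{#x, y#} = {#a, b#} \<longleftrightarrow> (x = a \<and> y = b) \<or> (x = b \<and> y = a)"
  by (auto simp: add_eq_conv_ex)

lemma dist_Pair_squared: "(dist u v)\<^sup>2 = (fst u - fst v)\<^sup>2 + (snd u - snd v)\<^sup>2"
  for u v :: "real \<times> real"
  by (cases u; cases v) (simp add: dist_Pair_Pair dist_real_def)

lemma abs_dist_diff_le_dist_add_dist: "\<bar>dist x y - dist a b\<bar> \<le> dist x a + dist y b"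
  by metric

lemma norm_vec2_squared: "(norm z)\<^sup>2 = (z$1)\<^sup>2 + (z$2)\<^sup>2" for z :: "real^2"
  unfolding power2_norm_eq_inner by (simp add: inner_vec_def sum_2 power2_eq_square)

lemma inner_vec2: "x \<bullet> y = x$1 * y$1 + x$2 * y$2" for x y :: "real^2"
  by (simp add: inner_vec_def sum_2)

(* Coordinates of x in the orthonormal frame with origin q and first axis pointing towards w. *)
definition frame :: "pt \<Rightarrow> pt \<Rightarrow> pt \<Rightarrow> real \<times> real" where
  "frame q w x = ((x - q) \<bullet> (w - q) / dist q w,
                  ((w - q)$1 * (x - q)$2 - (w - q)$2 * (x - q)$1) / dist q w)"

lemma frame_origin [simp]: "frame q w q = (0, 0)"
  by (simp add: frame_def)

lemma frame_axis [simp]: "q \<noteq> w \<Longrightarrow> frame q w w = (dist q w, 0)"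
  by (simp add: frame_def dist_norm power2_norm_eq_inner[symmetric] norm_minus_commute
      power2_eq_square algebra_simps)

lemma dist_frame:
  assumes "q \<noteq> w"
  shows "dist (frame q w x) (frame q w y) = dist x y"
proof -
  define u v where "u = x - y" and "v = w - q"
  have D: "(dist q w)\<^sup>2 = (v$1)\<^sup>2 + (v$2)\<^sup>2"
    by (simp add: v_def dist_norm norm_minus_commute[of q] norm_vec2_squared)
  have "(dist (frame q w x) (frame q w y))\<^sup>2 =
      ((u$1 * v$1 + u$2 * v$2)\<^sup>2 + (v$1 * u$2 - v$2 * u$1)\<^sup>2) / (dist q w)\<^sup>2"
    unfolding dist_Pair_squared frame_def u_def v_def inner_vec2
    by (simp add: power_divide add_divide_distrib diff_divide_distrib[symmetric] algebra_simps)
  also have "\<dots> = ((u$1)\<^sup>2 + (u$2)\<^sup>2) * (dist q w)\<^sup>2 / (dist q w)\<^sup>2"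
    unfolding D by (simp add: power2_eq_square algebra_simps)
  also have "\<dots> = (dist x y)\<^sup>2"
  proof -
    have "(dist q w)\<^sup>2 \<noteq> 0" using assms by simp
    then show ?thesis by (simp add: u_def dist_norm norm_vec2_squared)
  qed
  finally show ?thesis by simp
qed

lemma frame_eq_iff: "q \<noteq> w \<Longrightarrow> frame q w x = frame q w y \<longleftrightarrow> x = y"
  using dist_frame[of q w x y] by auto

(* u is the foot of the apex x on the line qw, and e^2 - u^2 its squared height. *)
lemma frame_apex:
  fixes q w x :: pt
  assumes "q \<noteq> w" and "{#dist x q, dist x w#} = {#e, f#}"
  defines "d \<equiv> dist q w"
  defines "u \<equiv> (d\<^sup>2 + e\<^sup>2 - f\<^sup>2) / (2 * d)"
  shows "fst (frame q w x) \<in> {u, d - u}" and "(snd (frame q w x))\<^sup>2 = e\<^sup>2 - u\<^sup>2"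
proof -
  obtain U V where UV: "frame q w x = (U, V)" by force
  have "d > 0" using assms(1) by (simp add: d_def)
  have "U\<^sup>2 + V\<^sup>2 = (dist (frame q w x) (frame q w q))\<^sup>2"
    by (simp add: UV dist_Pair_squared)
  then have to_q: "U\<^sup>2 + V\<^sup>2 = (dist x q)\<^sup>2"
    unfolding dist_frame[OF assms(1)] .
  have "(U - d)\<^sup>2 + V\<^sup>2 = (dist (frame q w x) (frame q w w))\<^sup>2"
    using assms(1) by (simp add: UV dist_Pair_squared d_def)
  then have to_w: "(U - d)\<^sup>2 + V\<^sup>2 = (dist x w)\<^sup>2"
    unfolding dist_frame[OF assms(1)] .
  from assms(2) consider "dist x q = e" "dist x w = f" | "dist x q = f" "dist x w = e"
    unfolding mset2_eq_iff by blast
  then have "U \<in> {u, d - u} \<and> V\<^sup>2 = e\<^sup>2 - u\<^sup>2"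
  proof cases
    case 1
    then have "2 * d * U = d\<^sup>2 + e\<^sup>2 - f\<^sup>2"
      using to_q to_w by (simp add: power2_eq_square algebra_simps)
    then have "U = u" using \<open>d > 0\<close> by (simp add: u_def field_simps)
    then show ?thesis using to_q 1 by simp
  next
    case 2
    then have "2 * d * (d - U) = d\<^sup>2 + e\<^sup>2 - f\<^sup>2"
      using to_q to_w by (simp add: power2_eq_square algebra_simps)
    then have "U - d = - u" using \<open>d > 0\<close> by (simp add: u_def field_simps)
    then have "U = d - u" "(U - d)\<^sup>2 = u\<^sup>2" by simp_all
    then show ?thesis using to_w 2 by simp
  qed
  then show "fst (frame q w x) \<in> {u, d - u}" and "(snd (frame q w x))\<^sup>2 = e\<^sup>2 - u\<^sup>2"
    using UV by simp_all
qed

lemma rectangle_vertices_right_triangle: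
  fixes z1 z2 z3 :: "real \<times> real"
  assumes "fst z1 \<in> {p, q}" "fst z2 \<in> {p, q}" "fst z3 \<in> {p, q}"
    and "snd z1 \<in> {r, s}" "snd z2 \<in> {r, s}" "snd z3 \<in> {r, s}"
    and "z1 \<noteq> z2" "z2 \<noteq> z3" "z3 \<noteq> z1"
  shows "{#(dist z1 z2)\<^sup>2, (dist z2 z3)\<^sup>2, (dist z3 z1)\<^sup>2#} =
    {#(p - q)\<^sup>2, (r - s)\<^sup>2, (p - q)\<^sup>2 + (r - s)\<^sup>2#}"
  using assms unfolding dist_Pair_squared
  by (cases z1; cases z2; cases z3)
    (auto simp: power2_commute[of q p] power2_commute[of s r] add_mset_commute)

lemma three_apexes_right_triangle:
  fixes q w x1 x2 x3 :: pt
  assumes "q \<noteq> w"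
    and apex: "{#dist x1 q, dist x1 w#} = {#e, f#}" "{#dist x2 q, dist x2 w#} = {#e, f#}"
      "{#dist x3 q, dist x3 w#} = {#e, f#}"
    and "x1 \<noteq> x2" "x2 \<noteq> x3" "x3 \<noteq> x1"
  defines "d \<equiv> dist q w"
  defines "u \<equiv> (d\<^sup>2 + e\<^sup>2 - f\<^sup>2) / (2 * d)"
  defines "h \<equiv> e\<^sup>2 - u\<^sup>2"
  shows "{#(dist x1 x2)\<^sup>2, (dist x2 x3)\<^sup>2, (dist x3 x1)\<^sup>2#} = {#(2 * u - d)\<^sup>2, 4 * h, (2 * u - d)\<^sup>2 + 4 * h#}"
proof -
  define z where "z = frame q w"
  have fst_z: "fst (z x) \<in> {u, d - u}" and snd_z_squared: "(snd (z x))\<^sup>2 = h"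
    if "{#dist x q, dist x w#} = {#e, f#}" for x
    using frame_apex[OF assms(1) that] by (simp_all add: z_def d_def u_def h_def)
  have "h \<ge> 0" using snd_z_squared[OF apex(1)] by (metis zero_le_power2)
  have snd_z: "snd (z x) \<in> {sqrt h, - sqrt h}" if "{#dist x q, dist x w#} = {#e, f#}" for x
    using snd_z_squared[OF that] by (auto simp: power2_eq_iff)
  have "z x1 \<noteq> z x2" "z x2 \<noteq> z x3" "z x3 \<noteq> z x1"
    using assms(5-7) by (simp_all add: z_def frame_eq_iff[OF assms(1)])
  note rectangle_vertices_right_triangle[OF fst_z[OF apex(1)] fst_z[OF apex(2)] fst_z[OF apex(3)]
      snd_z[OF apex(1)] snd_z[OF apex(2)] snd_z[OF apex(3)] this]
  moreover have "(u - (d - u))\<^sup>2 = (2 * u - d)\<^sup>2" "(sqrt h - - sqrt h)\<^sup>2 = 4 * h"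
    using \<open>h \<ge> 0\<close> by (simp_all add: power2_eq_square algebra_simps)
  ultimately show ?thesis by (simp add: z_def dist_frame[OF assms(1)])
qed

definition sides_30_60_90 :: "real multiset \<Rightarrow> bool" where
  "sides_30_60_90 S \<longleftrightarrow> (\<exists>t>0. image_mset (\<lambda>s. s\<^sup>2) S = {#t, 3 * t, 4 * t#})"

lemma sides_30_60_90_if_apex_right_triangle:
  fixes d e f :: real
  assumes "d > 0" "e > 0" "f > 0"
  defines "u \<equiv> (d\<^sup>2 + e\<^sup>2 - f\<^sup>2) / (2 * d)"
  defines "h \<equiv> e\<^sup>2 - u\<^sup>2"
  assumes squares: "{#d\<^sup>2, e\<^sup>2, f\<^sup>2#} = {#(2 * u - d)\<^sup>2, 4 * h, (2 * u - d)\<^sup>2 + 4 * h#}"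
  shows "sides_30_60_90 {#d, e, f#}"
proof -
  have "2 * u * d = d\<^sup>2 + e\<^sup>2 - f\<^sup>2" using \<open>d > 0\<close> by (simp add: u_def)
  then have hypotenuse: "(2 * u - d)\<^sup>2 + 4 * h = 2 * e\<^sup>2 + 2 * f\<^sup>2 - d\<^sup>2"
    by (simp add: h_def power2_eq_square algebra_simps)
  have "d\<^sup>2 + e\<^sup>2 + f\<^sup>2 = 2 * ((2 * u - d)\<^sup>2 + 4 * h)"
    using arg_cong[OF squares, of sum_mset] by simp
  then have pythagoras: "d\<^sup>2 = e\<^sup>2 + f\<^sup>2" using hypotenuse by argo
  then have "(2 * u - d)\<^sup>2 + 4 * h = d\<^sup>2" using hypotenuse by linarith
  then have "{#e\<^sup>2, f\<^sup>2#} = {#(2 * u - d)\<^sup>2, 4 * h#}"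
    using squares by (simp add: add_mset_commute)
  then have "4 * h = e\<^sup>2 \<or> 4 * h = f\<^sup>2" by (auto simp: mset2_eq_iff)
  moreover have "d\<^sup>2 * (4 * h) = 4 * e\<^sup>2 * f\<^sup>2"
  proof -
    have "u * d = e\<^sup>2" using \<open>2 * u * d = d\<^sup>2 + e\<^sup>2 - f\<^sup>2\<close> pythagoras by simp
    have "d\<^sup>2 * h = d\<^sup>2 * e\<^sup>2 - (u * d)\<^sup>2" by (simp add: h_def power2_eq_square algebra_simps)
    also have "\<dots> = e\<^sup>2 * f\<^sup>2" using \<open>u * d = e\<^sup>2\<close> pythagoras by (simp add: power2_eq_square algebra_simps)
    finally show ?thesis by simp
  qed
  ultimately show ?thesis
  proof (elim disjE)
    assume "4 * h = e\<^sup>2" "d\<^sup>2 * (4 * h) = 4 * e\<^sup>2 * f\<^sup>2"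
    then have "e\<^sup>2 * d\<^sup>2 = e\<^sup>2 * (4 * f\<^sup>2)" by algebra
    then have "d\<^sup>2 = 4 * f\<^sup>2" using assms(2) by simp
    then show ?thesis using pythagoras assms(3) unfolding sides_30_60_90_def
      by (intro exI[of _ "f\<^sup>2"]) (simp add: add_mset_commute)
  next
    assume "4 * h = f\<^sup>2" "d\<^sup>2 * (4 * h) = 4 * e\<^sup>2 * f\<^sup>2"
    then have "f\<^sup>2 * d\<^sup>2 = f\<^sup>2 * (4 * e\<^sup>2)" by algebra
    then have "d\<^sup>2 = 4 * e\<^sup>2" using assms(3) by simp
    then show ?thesis using pythagoras assms(2) unfolding sides_30_60_90_def
      by (intro exI[of _ "e\<^sup>2"]) (simp add: add_mset_commute)
  qed
qed

lemma three_apexes_30_60_90: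
  fixes q w x1 x2 x3 :: pt
  assumes "q \<noteq> w" "e > 0" "f > 0"
    and apex: "{#dist x1 q, dist x1 w#} = {#e, f#}" "{#dist x2 q, dist x2 w#} = {#e, f#}"
      "{#dist x3 q, dist x3 w#} = {#e, f#}"
    and sides: "{#dist x1 x2, dist x2 x3, dist x3 x1#} = {#dist q w, e, f#}"
  shows "sides_30_60_90 {#dist q w, e, f#}"
proof -
  have "\<forall>s \<in># {#dist x1 x2, dist x2 x3, dist x3 x1#}. s > 0"
    unfolding sides using assms(1-3) by simp
  then have "x1 \<noteq> x2" "x2 \<noteq> x3" "x3 \<noteq> x1" by auto
  have "{#(dist q w)\<^sup>2, e\<^sup>2, f\<^sup>2#} = {#(dist x1 x2)\<^sup>2, (dist x2 x3)\<^sup>2, (dist x3 x1)\<^sup>2#}"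
    using arg_cong[OF sides, of "image_mset (\<lambda>s. s\<^sup>2)"] by simp
  also note three_apexes_right_triangle[OF assms(1) apex \<open>x1 \<noteq> x2\<close> \<open>x2 \<noteq> x3\<close> \<open>x3 \<noteq> x1\<close>]
  finally show ?thesis
    using assms(1-3) by (intro sides_30_60_90_if_apex_right_triangle) simp_all
qed

lemma mset3_cancel_middle: "{#x, m, y#} = {#a, m, b#} \<Longrightarrow> {#x, y#} = {#a, b#}"
  by (simp add: add_mset_commute[of _ m])

lemma F32_configuration_30_60_90:
  fixes x1 x2 x3 q w :: pt
  assumes "a > 0" "b > 0" "c > 0"
    and "{#dist x1 x2, dist x2 x3, dist x3 x1#} = {#a, b, c#}"
    and "{#dist x1 q, dist q w, dist w x1#} = {#a, b, c#}"
      "{#dist x2 q, dist q w, dist w x2#} = {#a, b, c#}"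
      "{#dist x3 q, dist q w, dist w x3#} = {#a, b, c#}"
  shows "sides_30_60_90 {#a, b, c#}"
proof -
  define e f where "e = dist x1 q" and "f = dist x1 w"
  have abc: "{#a, b, c#} = {#dist q w, e, f#}"
    using assms(5) by (simp add: e_def f_def dist_commute add_mset_commute)
  have "\<forall>s \<in># {#dist q w, e, f#}. s > 0" using assms(1-3) unfolding abc[symmetric] by simp
  then have "q \<noteq> w" "e > 0" "f > 0" by auto
  have "{#dist x q, dist x w#} = {#e, f#}" if "{#dist x q, dist q w, dist w x#} = {#a, b, c#}" for x
    using mset3_cancel_middle[of "dist x q" "dist q w" "dist w x" e f] that abc
    by (simp add: dist_commute add_mset_commute)
  then show ?thesis
    unfolding abc using three_apexes_30_60_90[OF \<open>q \<noteq> w\<close> \<open>e > 0\<close> \<open>f > 0\<close>] assms(4-7) abc by metis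
qed

lemma angle_at_law_of_cosines:
  "angle_at p q r = arccos (((dist p q)\<^sup>2 + (dist p r)\<^sup>2 - (dist q r)\<^sup>2) / (2 * dist p q * dist p r))"
  unfolding angle_at_def dot_norm_neg
  by (simp add: dist_norm norm_minus_commute[of p] mult.assoc)

lemma arccos_law_of_cosines_30_60_90:
  fixes x y z t :: real
  assumes "y > 0" "z > 0" "t > 0" and squares: "{#x\<^sup>2, y\<^sup>2, z\<^sup>2#} = {#t, 3 * t, 4 * t#}"
  shows "arccos ((y\<^sup>2 + z\<^sup>2 - x\<^sup>2) / (2 * y * z)) =
    (if x\<^sup>2 = t then pi / 6 else if x\<^sup>2 = 3 * t then pi / 3 else pi / 2)"
proof -
  have sum: "x\<^sup>2 + y\<^sup>2 + z\<^sup>2 = 8 * t" using arg_cong[OF squares, of sum_mset] by simp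
  have prod: "x\<^sup>2 * (y\<^sup>2 * z\<^sup>2) = 12 * t ^ 3" using arg_cong[OF squares, of prod_mset]
    by (simp add: power3_eq_cube)
  have yz: "y * z = sqrt (y\<^sup>2 * z\<^sup>2)" using assms(1,2) by (simp add: real_sqrt_mult)
  have "x\<^sup>2 \<in># {#t, 3 * t, 4 * t#}" unfolding squares[symmetric] by simp
  then consider "x\<^sup>2 = t" | "x\<^sup>2 = 3 * t" | "x\<^sup>2 = 4 * t" by auto
  then show ?thesis
  proof cases
    case 1
    moreover have "sqrt 12 = 2 * sqrt 3" using real_sqrt_mult[of 4 3] by simp
    ultimately have "y * z = 2 * sqrt 3 * t"
      using prod \<open>t > 0\<close> unfolding yz by (simp add: power3_eq_cube real_sqrt_mult)
    then have "(y\<^sup>2 + z\<^sup>2 - x\<^sup>2) / (2 * y * z) = cos (pi / 6)"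
      using 1 sum \<open>t > 0\<close> by (simp add: cos_30 field_simps)
    then show ?thesis using 1 by (simp add: arccos_cos)
  next
    case 2
    then have "y * z = 2 * t"
      using prod \<open>t > 0\<close> unfolding yz by (simp add: power3_eq_cube real_sqrt_mult)
    then have "(y\<^sup>2 + z\<^sup>2 - x\<^sup>2) / (2 * y * z) = cos (pi / 3)"
      using 2 sum \<open>t > 0\<close> by (simp add: cos_60 field_simps)
    then show ?thesis using 2 \<open>t > 0\<close> by (simp add: arccos_cos)
  next
    case 3
    then show ?thesis using sum \<open>t > 0\<close> by simp
  qed
qed

lemma type_90_60_30_if_sides_30_60_90:
  assumes "A0 \<noteq> B0" "B0 \<noteq> C0" "C0 \<noteq> A0"
    and "sides_30_60_90 {#dist B0 C0, dist C0 A0, dist A0 B0#}"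
  shows "type_90_60_30 A0 B0 C0"
proof -
  define a b c where "a = dist B0 C0" and "b = dist C0 A0" and "c = dist A0 B0"
  obtain t where "t > 0" and squares: "{#a\<^sup>2, b\<^sup>2, c\<^sup>2#} = {#t, 3 * t, 4 * t#}"
    using assms(4) unfolding sides_30_60_90_def a_def b_def c_def by auto
  have pos: "a > 0" "b > 0" "c > 0" using assms(1-3) by (simp_all add: a_def b_def c_def)
  define g where "g s = (if s = t then pi / 6 else if s = 3 * t then pi / 3 else pi / 2)" for s
  have "angle_at A0 B0 C0 = g (a\<^sup>2)"
    using arccos_law_of_cosines_30_60_90[of c b t a] pos \<open>t > 0\<close> squares
    by (simp add: angle_at_law_of_cosines a_def b_def c_def g_def dist_commute add_mset_commute)
  moreover have "angle_at B0 C0 A0 = g (b\<^sup>2)"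
    using arccos_law_of_cosines_30_60_90[of a c t b] pos \<open>t > 0\<close> squares
    by (simp add: angle_at_law_of_cosines a_def b_def c_def g_def dist_commute add_mset_commute)
  moreover have "angle_at C0 A0 B0 = g (c\<^sup>2)"
    using arccos_law_of_cosines_30_60_90[of b a t c] pos \<open>t > 0\<close> squares
    by (simp add: angle_at_law_of_cosines a_def b_def c_def g_def dist_commute add_mset_commute)
  moreover have "image_mset g {#a\<^sup>2, b\<^sup>2, c\<^sup>2#} = {#pi / 2, pi / 3, pi / 6#}"
    unfolding squares using \<open>t > 0\<close> by (simp add: g_def add_mset_commute)
  ultimately show ?thesis unfolding type_90_60_30_def by simp
qed

definition side_defect :: "real \<Rightarrow> real \<Rightarrow> real \<Rightarrow> pt \<Rightarrow> pt \<Rightarrow> pt \<Rightarrow> real" where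
  "side_defect a b c x y z = max \<bar>dist y z - a\<bar> (max \<bar>dist z x - b\<bar> \<bar>dist x y - c\<bar>)"

definition tri_defect :: "real \<Rightarrow> real \<Rightarrow> real \<Rightarrow> pt \<Rightarrow> pt \<Rightarrow> pt \<Rightarrow> real" where
  "tri_defect a b c x y z = Min {side_defect a b c x y z, side_defect a b c y z x, side_defect a b c z x y,
     side_defect a b c y x z, side_defect a b c x z y, side_defect a b c z y x}"

lemma side_defect_le_iff:
  "side_defect a b c x y z \<le> \<delta> \<longleftrightarrow> \<bar>dist y z - a\<bar> \<le> \<delta> \<and> \<bar>dist z x - b\<bar> \<le> \<delta> \<and> \<bar>dist x y - c\<bar> \<le> \<delta>"
  unfolding side_defect_def by simp

lemma side_defect_nonneg: "side_defect a b c x y z \<ge> 0"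
  unfolding side_defect_def by simp

lemma side_defect_eq_0_iff:
  "side_defect a b c x y z = 0 \<longleftrightarrow> dist y z = a \<and> dist z x = b \<and> dist x y = c"
  using side_defect_nonneg[of a b c x y z] side_defect_le_iff[of a b c x y z 0] by auto

lemma tri_defect_nonneg: "tri_defect a b c x y z \<ge> 0"
  unfolding tri_defect_def by (simp add: side_defect_nonneg)

lemma tri_defect_le_side_defect: "tri_defect a b c x y z \<le> side_defect a b c x y z"
  unfolding tri_defect_def by (rule Min_le) simp_all

lemma tri_defect_cong:
  assumes "{p, q, r} = {x, y, z}" "p \<noteq> q" "q \<noteq> r" "p \<noteq> r"
  shows "tri_defect a b c p q r = tri_defect a b c x y z"
proof -
  have "p \<in> {x, y, z}" "q \<in> {x, y, z}" "r \<in> {x, y, z}" using assms(1) by auto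
  then have "(p, q, r) \<in> {(x, y, z), (y, z, x), (z, x, y), (y, x, z), (x, z, y), (z, y, x)}"
    using assms(2-4) by auto
  then show ?thesis
    unfolding tri_defect_def by (elim insertE emptyE) (simp_all only: prod.inject insert_commute)
qed

lemma tri_defect_translate: "tri_defect a b c (x + v) (y + v) (z + v) = tri_defect a b c x y z"
  unfolding tri_defect_def side_defect_def dist_add_cancel2 ..

lemma tri_defect_eq_0_imp_sides:
  assumes "tri_defect a b c x y z = 0"
  shows "{#dist x y, dist y z, dist z x#} = {#a, b, c#}"
proof -
  have "tri_defect a b c x y z \<in> {side_defect a b c x y z, side_defect a b c y z x, side_defect a b c z x y,
     side_defect a b c y x z, side_defect a b c x z y, side_defect a b c z y x}"
    unfolding tri_defect_def by (rule Min_in) simp_all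
  then show ?thesis
    using assms by (auto simp: side_defect_eq_0_iff dist_commute add_mset_commute)
qed

lemma dist_le_if_tri_defect_le:
  assumes "tri_defect a b c x y z \<le> \<delta>" "a \<ge> 0" "b \<ge> 0" "c \<ge> 0"
  shows "dist x y \<le> a + b + c + \<delta>" "dist y z \<le> a + b + c + \<delta>" "dist z x \<le> a + b + c + \<delta>"
proof -
  from assms(1) consider "side_defect a b c x y z \<le> \<delta>" | "side_defect a b c y z x \<le> \<delta>"
    | "side_defect a b c z x y \<le> \<delta>" | "side_defect a b c y x z \<le> \<delta>" | "side_defect a b c x z y \<le> \<delta>"
    | "side_defect a b c z y x \<le> \<delta>"
    unfolding tri_defect_def by (subst (asm) Min_le_iff) auto
  then show "dist x y \<le> a + b + c + \<delta>" "dist y z \<le> a + b + c + \<delta>" "dist z x \<le> a + b + c + \<delta>"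
    unfolding side_defect_le_iff using assms(2-4) by (cases; simp add: dist_commute abs_le_iff)+
qed

lemma continuous_on_tri_defect [continuous_intros]:
  assumes "continuous_on S f" "continuous_on S g" "continuous_on S h"
  shows "continuous_on S (\<lambda>p. tri_defect a b c (f p) (g p) (h p))"
  unfolding tri_defect_def side_defect_def
  by (simp only: Min_insert Min_singleton finite_insert finite.emptyI insert_not_empty simp_thms)
    (intro continuous_intros assms)

lemma side_defect_if_eps_congruent:
  assumes "eps_congruent \<epsilon> x y z A0 B0 C0"
  shows "side_defect (dist B0 C0) (dist C0 A0) (dist A0 B0) x y z
    \<le> 2 * (\<epsilon> * Min {dist A0 B0, dist B0 C0, dist C0 A0})"
proof -
  define \<epsilon>' where "\<epsilon>' = \<epsilon> * Min {dist A0 B0, dist B0 C0, dist C0 A0}"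
  obtain A B C where "congruent_to A B C A0 B0 C0"
    and close: "dist x A \<le> \<epsilon>'" "dist y B \<le> \<epsilon>'" "dist z C \<le> \<epsilon>'"
    using assms unfolding eps_congruent_def Let_def \<epsilon>'_def by blast
  then have sides: "dist B0 C0 = dist B C" "dist C0 A0 = dist C A" "dist A0 B0 = dist A B"
    unfolding congruent_to_def by simp_all
  show ?thesis
    unfolding side_defect_le_iff \<epsilon>'_def[symmetric]
    using sides abs_dist_diff_le_dist_add_dist[of y z B C] abs_dist_diff_le_dist_add_dist[of z x C A]
      abs_dist_diff_le_dist_add_dist[of x y A B] close
    by (intro conjI) linarith+
qed

lemma tri_defect_of_tri_hypergraph_edge:
  assumes "{p, q, r} \<in> snd (tri_hypergraph A0 B0 C0 P \<epsilon>)" "p \<noteq> q" "q \<noteq> r" "p \<noteq> r"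
  shows "tri_defect (dist B0 C0) (dist C0 A0) (dist A0 B0) p q r
    \<le> 2 * (\<epsilon> * Min {dist A0 B0, dist B0 C0, dist C0 A0})"
proof -
  obtain x y z where "{p, q, r} = {x, y, z}" and "eps_congruent \<epsilon> x y z A0 B0 C0"
    using assms(1) unfolding tri_hypergraph_def snd_conv mem_Collect_eq by blast
  have "tri_defect (dist B0 C0) (dist C0 A0) (dist A0 B0) p q r
      = tri_defect (dist B0 C0) (dist C0 A0) (dist A0 B0) x y z"
    by (rule tri_defect_cong) fact+
  also have "\<dots> \<le> side_defect (dist B0 C0) (dist C0 A0) (dist A0 B0) x y z"
    by (rule tri_defect_le_side_defect)
  also have "\<dots> \<le> 2 * (\<epsilon> * Min {dist A0 B0, dist B0 C0, dist C0 A0})"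
    by (rule side_defect_if_eps_congruent) fact
  finally show ?thesis .
qed

definition F32_defect :: "real \<Rightarrow> real \<Rightarrow> real \<Rightarrow> pt \<Rightarrow> pt \<Rightarrow> pt \<Rightarrow> pt \<Rightarrow> pt \<Rightarrow> real" where
  "F32_defect a b c x1 x2 x3 x4 x5 = Max {tri_defect a b c x1 x2 x3, tri_defect a b c x1 x4 x5,
     tri_defect a b c x2 x4 x5, tri_defect a b c x3 x4 x5}"

lemma continuous_on_F32_defect [continuous_intros]:
  assumes "continuous_on S f1" "continuous_on S f2" "continuous_on S f3" "continuous_on S f4"
    "continuous_on S f5"
  shows "continuous_on S (\<lambda>p. F32_defect a b c (f1 p) (f2 p) (f3 p) (f4 p) (f5 p))"
  unfolding F32_defect_def
  by (simp only: Max_insert Max_singleton finite_insert finite.emptyI insert_not_empty simp_thms)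
    (intro continuous_intros assms)

lemma F32_defect_of_copy:
  assumes "inj_on f {1..5}" and edges: "\<forall>e\<in>snd F32. f ` e \<in> snd (tri_hypergraph A0 B0 C0 P \<epsilon>)"
  shows "F32_defect (dist B0 C0) (dist C0 A0) (dist A0 B0) (f 1) (f 2) (f 3) (f 4) (f 5)
    \<le> 2 * (\<epsilon> * Min {dist A0 B0, dist B0 C0, dist C0 A0})"
proof -
  have "tri_defect (dist B0 C0) (dist C0 A0) (dist A0 B0) (f i) (f j) (f k)
      \<le> 2 * (\<epsilon> * Min {dist A0 B0, dist B0 C0, dist C0 A0})"
    if "{i, j, k} \<in> snd F32" "{i, j, k} \<subseteq> {1..5}" "i \<noteq> j" "j \<noteq> k" "i \<noteq> k" for i j k :: nat
  proof (rule tri_defect_of_tri_hypergraph_edge)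
    show "{f i, f j, f k} \<in> snd (tri_hypergraph A0 B0 C0 P \<epsilon>)" using edges that(1) by auto
    show "f i \<noteq> f j" "f j \<noteq> f k" "f i \<noteq> f k"
      using inj_onD[OF assms(1)] that(2-5) by blast+
  qed
  then show ?thesis by (simp add: F32_defect_def F32_def)
qed

lemma F32_defect_translate:
  "F32_defect a b c (x1 + v) (x2 + v) (x3 + v) (x4 + v) (x5 + v) = F32_defect a b c x1 x2 x3 x4 x5"
  unfolding F32_defect_def tri_defect_translate ..

lemma F32_defect_pos:
  assumes "a > 0" "b > 0" "c > 0" "\<not> sides_30_60_90 {#a, b, c#}"
  shows "F32_defect a b c x1 x2 x3 x4 x5 > 0"
proof (rule ccontr)
  assume "\<not> F32_defect a b c x1 x2 x3 x4 x5 > 0"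
  then have "tri_defect a b c x1 x2 x3 \<le> 0" "tri_defect a b c x1 x4 x5 \<le> 0"
    "tri_defect a b c x2 x4 x5 \<le> 0" "tri_defect a b c x3 x4 x5 \<le> 0"
    by (simp_all add: F32_defect_def)
  then have "tri_defect a b c x1 x2 x3 = 0" "tri_defect a b c x1 x4 x5 = 0"
    "tri_defect a b c x2 x4 x5 = 0" "tri_defect a b c x3 x4 x5 = 0"
    using tri_defect_nonneg[of a b c] by (meson order.antisym)+
  from F32_configuration_30_60_90[OF assms(1-3) this[THEN tri_defect_eq_0_imp_sides]]
  show False using assms(4) by simp
qed

lemma F32_defect_lower_bound:
  assumes "a > 0" "b > 0" "c > 0" "\<not> sides_30_60_90 {#a, b, c#}"
  obtains m where "m > 0" "\<And>x1 x2 x3 x4 x5. m \<le> F32_defect a b c x1 x2 x3 x4 x5"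
proof -
  define R where "R = a + b + c + 1"
  (* Translate x4 to the origin; a defect below 1 keeps the other points within R of it. *)
  define K :: "(pt \<times> pt \<times> pt \<times> pt \<times> pt) set"
    where "K = cball 0 R \<times> cball 0 R \<times> cball 0 R \<times> {0} \<times> cball 0 R"
  define \<Phi> where "\<Phi> p = F32_defect a b c (fst p) (fst (snd p)) (fst (snd (snd p)))
    (fst (snd (snd (snd p)))) (snd (snd (snd (snd p))))" for p :: "pt \<times> pt \<times> pt \<times> pt \<times> pt"
  have "compact K" unfolding K_def by (intro compact_Times compact_cball compact_sing)
  moreover have "K \<noteq> {}" using assms(1-3) by (simp add: K_def R_def)
  moreover have "continuous_on K \<Phi>"
    unfolding \<Phi>_def by (intro continuous_intros)
  ultimately obtain p0 where "p0 \<in> K" and minimal: "\<And>p. p \<in> K \<Longrightarrow> \<Phi> p0 \<le> \<Phi> p"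
    using continuous_attains_inf by metis
  have "\<Phi> p0 > 0" unfolding \<Phi>_def using F32_defect_pos[OF assms] .
  show ?thesis
  proof (rule that[of "min (\<Phi> p0) 1"])
    show "min (\<Phi> p0) 1 > 0" using \<open>\<Phi> p0 > 0\<close> by simp
    fix x1 x2 x3 x4 x5
    show "min (\<Phi> p0) 1 \<le> F32_defect a b c x1 x2 x3 x4 x5"
    proof (cases "F32_defect a b c x1 x2 x3 x4 x5 \<le> 1")
      case True
      then have "tri_defect a b c x1 x4 x5 \<le> 1" "tri_defect a b c x2 x4 x5 \<le> 1"
        "tri_defect a b c x3 x4 x5 \<le> 1"
        by (simp_all add: F32_defect_def)
      then have "dist x1 x4 \<le> R" "dist x4 x5 \<le> R" "dist x2 x4 \<le> R" "dist x3 x4 \<le> R"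
        using dist_le_if_tri_defect_le(1,2) assms(1-3) unfolding R_def by (meson less_imp_le)+
      then have "(x1 - x4, x2 - x4, x3 - x4, 0, x5 - x4) \<in> K"
        by (simp add: K_def dist_norm norm_minus_commute)
      then have "\<Phi> p0 \<le> \<Phi> (x1 + - x4, x2 + - x4, x3 + - x4, x4 + - x4, x5 + - x4)"
        by (intro minimal) simp
      also have "\<dots> = F32_defect a b c x1 x2 x3 x4 x5"
        unfolding \<Phi>_def fst_conv snd_conv F32_defect_translate ..
      finally show ?thesis by simp
    qed simp
  qed
qed

theorem lemma2p6:
  fixes A0 B0 C0 :: "real^2"
  assumes "is_triangle A0 B0 C0"
    and "\<not> type_90_60_30 A0 B0 C0"
  shows "forbidden_for F32 A0 B0 C0"
proof -
  define a b c where "a = dist B0 C0" and "b = dist C0 A0" and "c = dist A0 B0"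
  have "A0 \<noteq> B0" "B0 \<noteq> C0" "C0 \<noteq> A0"
    using assms(1) unfolding is_triangle_def by (auto simp: insert_commute)
  then have "a > 0" "b > 0" "c > 0" by (simp_all add: a_def b_def c_def)
  moreover have "\<not> sides_30_60_90 {#a, b, c#}"
    using type_90_60_30_if_sides_30_60_90[OF \<open>A0 \<noteq> B0\<close> \<open>B0 \<noteq> C0\<close> \<open>C0 \<noteq> A0\<close>] assms(2)
    by (auto simp: a_def b_def c_def)
  ultimately obtain m where "m > 0" and lower: "\<And>x1 x2 x3 x4 x5. m \<le> F32_defect a b c x1 x2 x3 x4 x5"
    using F32_defect_lower_bound by metis
  define M where "M = Min {dist A0 B0, dist B0 C0, dist C0 A0}"
  have "M > 0" using \<open>a > 0\<close> \<open>b > 0\<close> \<open>c > 0\<close> by (simp add: M_def a_def b_def c_def)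
  define \<epsilon> where "\<epsilon> = m / (4 * M)"
  have "\<epsilon> > 0" "2 * (\<epsilon> * M) < m" using \<open>m > 0\<close> \<open>M > 0\<close> by (simp_all add: \<epsilon>_def)
  have "free_of F32 (tri_hypergraph A0 B0 C0 P \<epsilon>)" for P
    unfolding free_of_def contains_copy_def
  proof clarify
    fix f assume "inj_on f (fst F32)" "\<forall>e\<in>snd F32. f ` e \<in> snd (tri_hypergraph A0 B0 C0 P \<epsilon>)"
    from F32_defect_of_copy[OF _ this(2)] this(1)
    have "F32_defect a b c (f 1) (f 2) (f 3) (f 4) (f 5) \<le> 2 * (\<epsilon> * M)"
      by (simp add: F32_def a_def b_def c_def M_def)
    then show False using lower \<open>2 * (\<epsilon> * M) < m\<close> by (meson le_less_trans not_le)
  qed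
  then show ?thesis unfolding forbidden_for_def using \<open>\<epsilon> > 0\<close> by blast
qed

end
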